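(* For every $n\ge1$ let $A_n$ and $B_n$ denote the numbers of tilings of the regions $A_n$ and $B_n$ (defined in the context). Then $A_1=1$, $A_2=4$, $B_1=2$, $B_2=3$, and for all $n\ge1$ $$A_n=\frac14\left[(1+\sqrt2)^{n+1}+(1-\sqrt2)^{n+1}\right]+\frac12(-1)^n=\frac12H_{n+1}+\frac12(-1)^n,$$ $$B_n=\frac14\left[(1+\sqrt2)^{n+1}+(1-\sqrt2)^{n+1}\right]-\frac12(-1)^n=\frac12H_{n+1}-\frac12(-1)^n,$$ where $H_m=\frac{(1+\sqrt2)^m+(1-\sqrt2)^m}{2}$. Thus $(A_n)_{n\ge1}=(1,4,8,21,49,120,288,\dots)$ and $(B_n)_{n\ge1}=(2,3,9,20,50,119,289,\dots)$.
   Context: Let $s=\sqrt3/2$. Consider the standard triangular lattice in the plane whose vertices are the points $(a+b/2,\,bs)$ with $a,b\in\mathbb Z$ and whose edges are the unit segments joining lattice points in the directions $0^\circ,60^\circ,120^\circ$; it divides the plane into unit equilateral triangles called cells. A small tile is a single cell; a large tile is an equilateral triangle of side $2$ whose vertices are lattice points (so it is a union of $4$ cells; it may point up or down). For a region $R$ that is a finite union of cells, a tiling of $R$ is a finite set of small and large tiles, each contained in $R$, with pairwise disjoint interiors and union equal to $R$. For $n\ge1$, $A_n$ is the parallelogram with vertices $(0,0),(n,0),(n+1,2s),(1,2s)$ and $B_n$ is the trapezoid with vertices $(0,0),(n+1,0),(n,2s),(1,2s)$ (for $n=1$ it is a triangle of side $2$); each consists of $4n$ cells. By abuse of notation, $A_n$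 and $B_n$ also denote the number of tilings of these regions. *)

theory Defs
  imports Complex_Main
begin

text \<open>Lattice point (a,b) in Z^2 stands for the plane point (a + b/2, b*sqrt3/2).
  A cell is encoded as (a, b, up): the up-cell has vertices (a,b),(a+1,b),(a,b+1);
  the down-cell has vertices (a+1,b),(a,b+1),(a+1,b+1).  Every unit triangle of the
  lattice is exactly one such cell.\<close>

type_synonym cell = "int \<times> int \<times> bool"

definition small_tiles :: "cell set set" where
  "small_tiles = {{c} | c. True}"

text \<open>Large up tile with vertices (a,b),(a+2,b),(a,b+2);
  large down tile with vertices (a+2,b),(a,b+2),(a+2,b+2), as sets of cells.\<close>
definition large_up :: "int \<Rightarrow> int \<Rightarrow> cell set" where
  "large_up a b = {(a,b,True), (a+1,b,True), (a,b+1,True), (a,b,False)}"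

definition large_down :: "int \<Rightarrow> int \<Rightarrow> cell set" where
  "large_down a b = {(a+1,b,False), (a,b+1,False), (a+1,b+1,False), (a+1,b+1,True)}"

definition large_tiles :: "cell set set" where
  "large_tiles = {large_up a b | a b. True} \<union> {large_down a b | a b. True}"

definition tilings :: "cell set \<Rightarrow> cell set set set" where
  "tilings R = {T. finite T \<and> T \<subseteq> small_tiles \<union> large_tiles \<and> (\<forall>t\<in>T. t \<subseteq> R)
      \<and> (\<forall>t\<in>T. \<forall>t'\<in>T. t \<noteq> t' \<longrightarrow> t \<inter> t' = {}) \<and> \<Union>T = R}"

definition num_tilings :: "cell set \<Rightarrow> nat" where
  "num_tilings R = card (tilings R)"

text \<open>A_n: parallelogram (0,0),(n,0),(n+1,2s),(1,2s).\<close>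
definition regionA :: "nat \<Rightarrow> cell set" where
  "regionA n = {(a,b,u). 0 \<le> a \<and> a < int n \<and> 0 \<le> b \<and> b < 2}"

text \<open>B_n: trapezoid (0,0),(n+1,0),(n,2s),(1,2s).\<close>
definition regionB :: "nat \<Rightarrow> cell set" where
  "regionB n = {(a,b,u). 0 \<le> a \<and> 0 \<le> b \<and> b < 2 \<and>
      (if u then a + b \<le> int n else a + b \<le> int n - 1)}"

definition A :: "nat \<Rightarrow> nat" where "A n = num_tilings (regionA n)"
definition B :: "nat \<Rightarrow> nat" where "B n = num_tilings (regionB n)"

definition H :: "nat \<Rightarrow> real" where
  "H m = ((1 + sqrt 2) ^ m + (1 - sqrt 2) ^ m) / 2"

end

theory Submission
  imports Defs "HOL-Library.Disjoint_Sets"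
begin

text \<open>A tiling is determined by its set of large tiles, because the cells they leave
  uncovered can be filled with small tiles in exactly one way. Both regions lie in the strip
  of height 2, where the large tiles form a single row alternately pointing up and down;
  numbered 0, 1, 2, \<dots>, tile \<open>k\<close> meets tile \<open>k - 2\<close> and, for even \<open>k\<close>,
  tile \<open>k - 1\<close>. Counting families of pairwise disjoint tiles of an initial segment while
  recording which of the last two tiles are blocked yields a linear recurrence solved by the
  Pell numbers \<open>P\<close>: \<open>2 A\<^sub>n = P\<^sub>n\<^sub>+\<^sub>1 + P\<^sub>n + (-1)\<^sup>n\<close>
  and \<open>2 B\<^sub>n = P\<^sub>n\<^sub>+\<^sub>1 + P\<^sub>n - (-1)\<^sup>n\<close>, where \<open>P\<^sub>n\<^sub>+\<^sub>1 + P\<^sub>n = H\<^sub>n\<^sub>+\<^sub>1\<close>.\<close>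

lemma nat_even_odd_cases:
  fixes j :: nat
  obtains a where "j = 2 * a" | a where "j = Suc (2 * a)"
  by (metis oddE evenE Suc_eq_plus1)

lemma card_subsets_insert:
  assumes "finite S" "x \<notin> S"
  shows "card {C. C \<subseteq> insert x S \<and> P C} =
    card {C. C \<subseteq> S \<and> P C} + card {C. C \<subseteq> S \<and> P (insert x C)}"
proof -
  have split: "{C. C \<subseteq> insert x S \<and> P C} =
      {C. C \<subseteq> S \<and> P C} \<union> insert x ` {C. C \<subseteq> S \<and> P (insert x C)}"
  proof (intro equalityI subsetI)
    fix C assume "C \<in> {C. C \<subseteq> insert x S \<and> P C}"
    then have C: "C \<subseteq> insert x S" "P C" by blast+
    show "C \<in> {C. C \<subseteq> S \<and> P C} \<union> insert x ` {C. C \<subseteq> S \<and> P (insert x C)}"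
    proof (cases "x \<in> C")
      case True
      then have "C = insert x (C - {x})" "C - {x} \<subseteq> S" using C(1) by blast+
      with C(2) show ?thesis by (metis (no_types, lifting) UnI2 image_eqI mem_Collect_eq)
    qed (use C in blast)
  qed blast
  have "inj_on (insert x) {C. C \<subseteq> S \<and> P (insert x C)}"
    using assms(2) by (intro inj_onI) (metis insert_ident subsetD mem_Collect_eq)
  moreover have "{C. C \<subseteq> S \<and> P C} \<inter> insert x ` {C. C \<subseteq> S \<and> P (insert x C)} = {}"
    using assms(2) by blast
  ultimately show ?thesis
    unfolding split using assms(1) by (simp add: card_Un_disjoint card_image)
qed

definition large_packings :: "cell set \<Rightarrow> cell set set set" where
  "large_packings R = {L. L \<subseteq> large_tiles \<and> (\<forall>t\<in>L. t \<subseteq> R) \<and> disjoint L}"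

definition fill_small :: "cell set \<Rightarrow> cell set set \<Rightarrow> cell set set" where
  "fill_small R L = L \<union> (\<lambda>c. {c}) ` (R - \<Union>L)"

lemma small_tiles_iff: "t \<in> small_tiles \<longleftrightarrow> (\<exists>c. t = {c})"
  unfolding small_tiles_def by auto

lemma large_tile_not_small: "t \<in> large_tiles \<Longrightarrow> t \<notin> small_tiles"
  by (auto simp: large_tiles_def small_tiles_iff large_up_def large_down_def doubleton_eq_iff)

lemma fill_small_large_part:
  assumes "T \<in> tilings R"
  shows "fill_small R (T \<inter> large_tiles) = T"
proof -
  have T: "T \<subseteq> small_tiles \<union> large_tiles" "\<forall>t\<in>T. t \<subseteq> R"
    "\<forall>t\<in>T. \<forall>t'\<in>T. t \<noteq> t' \<longrightarrow> t \<inter> t' = {}" "\<Union>T = R"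
    using assms unfolding tilings_def by blast+
  have "(\<lambda>c. {c}) ` (R - \<Union>(T \<inter> large_tiles)) = T - large_tiles"
  proof (intro equalityI subsetI)
    fix x assume "x \<in> (\<lambda>c. {c}) ` (R - \<Union>(T \<inter> large_tiles))"
    then obtain c where x: "x = {c}" "c \<in> R" "c \<notin> \<Union>(T \<inter> large_tiles)"
      by blast
    from \<open>c \<in> R\<close> obtain t where "t \<in> T" "c \<in> t"
      unfolding T(4)[symmetric] by blast
    with x(3) have "t \<notin> large_tiles" by blast
    with T(1) \<open>t \<in> T\<close> have "t \<in> small_tiles" by blast
    with \<open>c \<in> t\<close> have "t = x" by (auto simp: small_tiles_iff x(1))
    with \<open>t \<in> T\<close> \<open>t \<notin> large_tiles\<close> show "x \<in> T - large_tiles" by blast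
  next
    fix x assume x: "x \<in> T - large_tiles"
    with T(1) have "x \<in> small_tiles" by blast
    then obtain c where c: "x = {c}" unfolding small_tiles_iff ..
    have "c \<in> R" using x T(2) unfolding c by blast
    moreover have "c \<notin> t" if t: "t \<in> T \<inter> large_tiles" for t
    proof -
      from t x have "t \<noteq> x" by blast
      with t x T(3) have "t \<inter> x = {}" by blast
      then show ?thesis unfolding c by blast
    qed
    ultimately show "x \<in> (\<lambda>c. {c}) ` (R - \<Union>(T \<inter> large_tiles))"
      unfolding c by blast
  qed
  then show ?thesis unfolding fill_small_def by blast
qed

lemma large_part_fill_small:
  assumes "L \<in> large_packings R"
  shows "fill_small R L \<inter> large_tiles = L"
  using assms large_tile_not_small
  by (auto simp: fill_small_def large_packings_def small_tiles_iff)

lemma fill_small_in_tilings: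
  assumes "finite R" and L: "L \<in> large_packings R"
  shows "fill_small R L \<in> tilings R"
proof -
  have L: "L \<subseteq> large_tiles" "L \<subseteq> Pow R" "disjoint L"
    using L by (auto simp: large_packings_def)
  have "finite (fill_small R L)"
    using assms(1) L(2) finite_subset unfolding fill_small_def by blast
  moreover have "fill_small R L \<subseteq> small_tiles \<union> large_tiles"
    using L(1) by (auto simp: fill_small_def small_tiles_iff)
  moreover have "\<forall>t\<in>fill_small R L. t \<subseteq> R" "\<Union>(fill_small R L) = R"
    using L(2) unfolding fill_small_def by blast+
  moreover have "t \<inter> t' = {}" if "t \<in> fill_small R L" "t' \<in> fill_small R L" "t \<noteq> t'" for t t'
    using that L(3) unfolding fill_small_def pairwise_def disjnt_def by blast
  ultimately show ?thesis
    unfolding tilings_def by blast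
qed

lemma card_tilings_eq_card_large_packings:
  assumes "finite R"
  shows "card (tilings R) = card (large_packings R)"
proof -
  have "bij_betw (\<lambda>T. T \<inter> large_tiles) (tilings R) (large_packings R)"
  proof (rule bij_betw_byWitness[where f' = "fill_small R"])
    show "(\<lambda>T. T \<inter> large_tiles) ` tilings R \<subseteq> large_packings R"
      unfolding tilings_def large_packings_def pairwise_def disjnt_def by blast
  qed (use assms fill_small_large_part large_part_fill_small fill_small_in_tilings in auto)
  then show ?thesis by (rule bij_betw_same_card)
qed

definition strip :: "cell set" where
  "strip = {(a, b, u). 0 \<le> a \<and> 0 \<le> b \<and> b < 2}"

definition strip_tile :: "nat \<Rightarrow> cell set" where
  "strip_tile j = (if even j then large_up (int (j div 2)) 0 else large_down (int (j div 2)) 0)"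

lemma strip_tile_even [simp]: "strip_tile (2 * a) = large_up (int a) 0"
  by (simp add: strip_tile_def)

lemma strip_tile_odd [simp]: "strip_tile (Suc (2 * a)) = large_down (int a) 0"
  by (simp add: strip_tile_def)

lemma strip_tile_large: "strip_tile j \<in> large_tiles"
  by (cases j rule: nat_even_odd_cases) (auto simp: large_tiles_def)

lemma inj_strip_tile: "inj strip_tile"
proof (rule injI)
  fix i j assume "strip_tile i = strip_tile j"
  then show "i = j"
  proof (cases i rule: nat_even_odd_cases)
    case (1 a)
    then have "(int a, 0, True) \<in> strip_tile j" "(int a, 0, False) \<in> strip_tile j"
      using \<open>strip_tile i = strip_tile j\<close> by (auto simp: large_up_def)
    with 1 show ?thesis
      by (cases j rule: nat_even_odd_cases) (auto simp: large_up_def large_down_def)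
  next
    case (2 a)
    then have "(int a + 1, 0, False) \<in> strip_tile j" "(int a, 1, False) \<in> strip_tile j"
      using \<open>strip_tile i = strip_tile j\<close> by (auto simp: large_down_def)
    with 2 show ?thesis
      by (cases j rule: nat_even_odd_cases) (auto simp: large_up_def large_down_def)
  qed
qed

lemma large_tile_in_strip:
  assumes "t \<in> large_tiles" "t \<subseteq> strip"
  obtains j where "t = strip_tile j"
proof -
  obtain a b where "t = large_up a b \<or> t = large_down a b"
    using assms(1) by (auto simp: large_tiles_def)
  then show thesis
  proof
    assume t: "t = large_up a b"
    then have "a \<ge> 0" "b = 0"
      using assms(2) by (auto simp: large_up_def strip_def)
    with t have "t = strip_tile (2 * nat a)" by simp
    then show thesis by (rule that)
  next
    assume t: "t = large_down a b"
    then have "a \<ge> 0" "b = 0"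
      using assms(2) by (auto simp: large_down_def strip_def)
    with t have "t = strip_tile (Suc (2 * nat a))" by simp
    then show thesis by (rule that)
  qed
qed

lemma large_packings_strip:
  assumes "R \<subseteq> strip"
  shows "large_packings R =
    (`) strip_tile ` {C. C \<subseteq> {j. strip_tile j \<subseteq> R} \<and> disjoint_family_on strip_tile C}"
proof (intro equalityI subsetI)
  fix L assume L: "L \<in> large_packings R"
  define C where "C = strip_tile -` L"
  have "L = strip_tile ` C"
  proof (intro equalityI subsetI)
    fix t assume "t \<in> L"
    with L assms have "t \<in> large_tiles" "t \<subseteq> strip"
      unfolding large_packings_def by blast+
    then obtain j where "t = strip_tile j" by (rule large_tile_in_strip)
    with \<open>t \<in> L\<close> show "t \<in> strip_tile ` C" by (auto simp: C_def)
  qed (auto simp: C_def)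
  moreover have "C \<subseteq> {j. strip_tile j \<subseteq> R}"
    using L unfolding C_def large_packings_def by blast
  moreover have "disjoint_family_on strip_tile C"
    unfolding disjoint_family_on_def
  proof (intro ballI impI)
    fix i j assume "i \<in> C" "j \<in> C" "i \<noteq> j"
    then have "strip_tile i \<noteq> strip_tile j" by (simp add: inj_strip_tile inj_eq)
    with \<open>i \<in> C\<close> \<open>j \<in> C\<close> L show "strip_tile i \<inter> strip_tile j = {}"
      unfolding C_def large_packings_def pairwise_def disjnt_def by blast
  qed
  ultimately show "L \<in> (`) strip_tile ` {C. C \<subseteq> {j. strip_tile j \<subseteq> R} \<and> disjoint_family_on strip_tile C}"
    by blast
next
  fix L assume "L \<in> (`) strip_tile ` {C. C \<subseteq> {j. strip_tile j \<subseteq> R} \<and> disjoint_family_on strip_tile C}"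
  then obtain C where L: "L = strip_tile ` C" and C: "C \<subseteq> {j. strip_tile j \<subseteq> R}"
    "disjoint_family_on strip_tile C" by blast
  have "disjoint L"
  proof (rule pairwiseI)
    fix s t assume "s \<in> L" "t \<in> L" "s \<noteq> t"
    then obtain i j where "s = strip_tile i" "t = strip_tile j" "i \<in> C" "j \<in> C" "i \<noteq> j"
      unfolding L by blast
    with C(2) show "disjnt s t" by (simp add: disjnt_def disjoint_family_onD)
  qed
  with L C(1) strip_tile_large show "L \<in> large_packings R"
    unfolding large_packings_def by blast
qed

lemma card_large_packings_strip:
  assumes "R \<subseteq> strip"
  shows "card (large_packings R) =
    card {C. C \<subseteq> {j. strip_tile j \<subseteq> R} \<and> disjoint_family_on strip_tile C}"
  unfolding large_packings_strip[OF assms]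
  by (rule card_image) (meson inj_onI inj_image_eq_iff inj_strip_tile)

lemma finite_regionA: "finite (regionA n)"
  by (rule finite_subset[of _ "{0..<int n} \<times> {0..<2} \<times> UNIV"]) (auto simp: regionA_def)

lemma finite_regionB: "finite (regionB n)"
  by (rule finite_subset[of _ "{0..int n} \<times> {0..<2} \<times> UNIV"])
    (auto simp: regionB_def split: if_splits)

lemma regionA_subset_strip: "regionA n \<subseteq> strip"
  by (auto simp: regionA_def strip_def)

lemma regionB_subset_strip: "regionB n \<subseteq> strip"
  by (auto simp: regionB_def strip_def)

lemma strip_tiles_in_regionA: "{j. strip_tile j \<subseteq> regionA (Suc m)} = {..<2 * m}"
proof -
  have "strip_tile j \<subseteq> regionA (Suc m) \<longleftrightarrow> j < 2 * m" for j
    by (cases j rule: nat_even_odd_cases) (auto simp: large_up_def large_down_def regionA_def)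
  then show ?thesis by auto
qed

lemma strip_tiles_in_regionB:
  "{j. strip_tile j \<subseteq> regionB (Suc m)} = {j. j < Suc (2 * m) \<and> j + 1 \<noteq> 2 * m}"
proof -
  have "strip_tile j \<subseteq> regionB (Suc m) \<longleftrightarrow> j < Suc (2 * m) \<and> j + 1 \<noteq> 2 * m" for j
    by (cases j rule: nat_even_odd_cases)
      (auto simp: large_up_def large_down_def regionB_def Suc_double_not_eq_double)
  then show ?thesis by auto
qed

definition conflicts :: "nat \<Rightarrow> nat set" where
  "conflicts k = {j. j + 2 = k \<or> odd j \<and> j + 1 = k}"

lemma strip_tiles_disjoint_iff:
  assumes "i < k"
  shows "strip_tile i \<inter> strip_tile k = {} \<longleftrightarrow> i \<notin> conflicts k"
  using assms unfolding conflicts_def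
  by (cases i rule: nat_even_odd_cases; cases k rule: nat_even_odd_cases)
    (auto simp: large_up_def large_down_def Suc_double_not_eq_double)

lemma disjoint_family_on_insert_strip_tile:
  assumes "C \<subseteq> {..<k}"
  shows "disjoint_family_on strip_tile (insert k C) \<longleftrightarrow>
    disjoint_family_on strip_tile C \<and> C \<inter> conflicts k = {}"
proof -
  have "strip_tile k \<inter> \<Union>(strip_tile ` C) = {} \<longleftrightarrow> C \<inter> conflicts k = {}"
    using assms strip_tiles_disjoint_iff by blast
  with assms show ?thesis by (subst disjoint_family_on_insert) auto
qed

definition num_packings :: "nat \<Rightarrow> nat set \<Rightarrow> nat" where
  "num_packings k Z = card {C. C \<subseteq> {..<k} \<and> disjoint_family_on strip_tile C \<and> C \<inter> Z = {}}"

lemma num_packings_Suc: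
  "num_packings (Suc k) Z =
    num_packings k Z + (if k \<in> Z then 0 else num_packings k (Z \<union> conflicts k))"
proof -
  have "{C. C \<subseteq> {..<k} \<and> disjoint_family_on strip_tile (insert k C) \<and> insert k C \<inter> Z = {}} =
      (if k \<in> Z then {} else
        {C. C \<subseteq> {..<k} \<and> disjoint_family_on strip_tile C \<and> C \<inter> (Z \<union> conflicts k) = {}})"
    by (auto simp: disjoint_family_on_insert_strip_tile)
  then show ?thesis
    unfolding num_packings_def lessThan_Suc by (simp add: card_subsets_insert)
qed

lemma num_packings_cong: "Z \<inter> {..<k} = Z' \<inter> {..<k} \<Longrightarrow> num_packings k Z = num_packings k Z'"
  unfolding num_packings_def by (rule arg_cong[where f = card]) blast

text \<open>The flags \<open>x1\<close>, \<open>x2\<close> forbid the indices \<open>k - 1\<close>, \<open>k - 2\<close>, the only ones that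
  can conflict with tiles added later.\<close>

definition num_packings_excl :: "nat \<Rightarrow> bool \<Rightarrow> bool \<Rightarrow> nat" where
  "num_packings_excl k x1 x2 = num_packings k {j. x1 \<and> j + 1 = k \<or> x2 \<and> j + 2 = k}"

lemma num_packings_excl_0: "num_packings_excl 0 x1 x2 = 1"
  unfolding num_packings_excl_def num_packings_def
  by (simp add: disjoint_family_on_def cong: conj_cong)

lemma num_packings_excl_Suc_True:
  "num_packings_excl (Suc k) True x2 = num_packings_excl k x2 False"
  unfolding num_packings_excl_def num_packings_Suc
  by (auto intro: num_packings_cong)

lemma num_packings_excl_Suc_False:
  "num_packings_excl (Suc k) False x2 =
    num_packings_excl k x2 False + num_packings_excl k (x2 \<or> even k) True"
proof -
  let ?Z = "{j. False \<and> j + 1 = Suc k \<or> x2 \<and> j + 2 = Suc k}"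
  have "num_packings k ?Z = num_packings_excl k x2 False"
    unfolding num_packings_excl_def by (rule num_packings_cong) auto
  moreover have "num_packings k (?Z \<union> conflicts k) = num_packings_excl k (x2 \<or> even k) True"
    unfolding num_packings_excl_def by (rule num_packings_cong) (auto simp: conflicts_def)
  ultimately show ?thesis
    unfolding num_packings_excl_def[of "Suc k"] num_packings_Suc by simp
qed

fun pell :: "nat \<Rightarrow> int" where
  "pell 0 = 0"
| "pell (Suc 0) = 1"
| "pell (Suc (Suc n)) = 2 * pell (Suc n) + pell n"

lemma num_packings_excl_even:
  "2 * int (num_packings_excl (2 * m) False False) = pell (m + 2) + pell (m + 1) - (-1) ^ m \<and>
   int (num_packings_excl (2 * m) True False) = pell (m + 1) \<and>
   2 * int (num_packings_excl (2 * m) True True) = pell (m + 1) + pell m + (-1) ^ m"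
proof (induction m)
  case 0
  then show ?case by (simp add: num_packings_excl_0)
next
  case (Suc m)
  have "2 * Suc m = Suc (Suc (2 * m))" by simp
  then have step:
    "num_packings_excl (2 * Suc m) False False = num_packings_excl (2 * m) False False +
      2 * num_packings_excl (2 * m) True True + num_packings_excl (2 * m) True False"
    "num_packings_excl (2 * Suc m) True False =
      num_packings_excl (2 * m) False False + num_packings_excl (2 * m) True True"
    "num_packings_excl (2 * Suc m) True True = num_packings_excl (2 * m) False False"
    by (simp_all add: num_packings_excl_Suc_True num_packings_excl_Suc_False)
  have "pell (m + 3) = 2 * pell (m + 2) + pell (m + 1)" "pell (m + 2) = 2 * pell (m + 1) + pell m"
    by (simp_all add: numeral_3_eq_3)
  with Suc.IH show ?case
    unfolding step by (simp add: algebra_simps)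
qed

lemma A_Suc_eq_num_packings: "A (Suc m) = num_packings_excl (2 * m) False False"
proof -
  have "A (Suc m) = card {C. C \<subseteq> {..<2 * m} \<and> disjoint_family_on strip_tile C}"
    unfolding A_def num_tilings_def card_tilings_eq_card_large_packings[OF finite_regionA]
      card_large_packings_strip[OF regionA_subset_strip] strip_tiles_in_regionA ..
  then show ?thesis
    by (simp add: num_packings_excl_def num_packings_def)
qed

lemma B_Suc_eq_num_packings:
  "B (Suc m) = num_packings_excl (2 * m) True False + num_packings_excl (2 * m) True True"
proof -
  have "B (Suc m) = card {C. C \<subseteq> {j. j < Suc (2 * m) \<and> j + 1 \<noteq> 2 * m} \<and>
      disjoint_family_on strip_tile C}"
    unfolding B_def num_tilings_def card_tilings_eq_card_large_packings[OF finite_regionB]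
      card_large_packings_strip[OF regionB_subset_strip] strip_tiles_in_regionB ..
  also have "\<dots> = num_packings_excl (Suc (2 * m)) False True"
    unfolding num_packings_excl_def num_packings_def
    by (rule arg_cong[where f = card]) auto
  finally show ?thesis by (simp add: num_packings_excl_Suc_False)
qed

lemma H_0: "H 0 = 1" and H_1: "H (Suc 0) = 1"
  by (simp_all add: H_def)

lemma H_Suc_Suc: "H (Suc (Suc n)) = 2 * H (Suc n) + H n"
proof -
  have pow: "x ^ Suc (Suc n) = 2 * x ^ Suc n + x ^ n" if "x\<^sup>2 = 2 * x + 1" for x :: real
  proof -
    have "x ^ Suc (Suc n) = x\<^sup>2 * x ^ n" by (simp add: power2_eq_square)
    also have "\<dots> = 2 * x ^ Suc n + x ^ n" using that by (simp add: algebra_simps)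
    finally show ?thesis .
  qed
  have "(1 + sqrt 2)\<^sup>2 = 2 * (1 + sqrt 2) + 1" "(1 - sqrt 2)\<^sup>2 = 2 * (1 - sqrt 2) + 1"
    by (simp_all add: power2_eq_square algebra_simps)
  then show ?thesis
    unfolding H_def by (simp only: pow) (simp add: field_simps)
qed

lemma H_Suc_eq_pell: "H (Suc n) = pell (Suc n) + pell n"
proof (induction n rule: pell.induct)
  case 1
  then show ?case by (simp add: H_1)
next
  case 2
  then show ?case by (simp add: H_Suc_Suc H_0 H_1)
next
  case (3 n)
  then show ?case by (simp add: H_Suc_Suc[of "Suc n"] H_Suc_Suc[of n])
qed

lemma A_B_eq_H:
  assumes "n \<ge> 1"
  shows "real (A n) = H (n + 1) / 2 + (-1) ^ n / 2"
    and "real (B n) = H (n + 1) / 2 - (-1) ^ n / 2"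
proof -
  obtain m where n: "n = Suc m" using assms by (cases n) auto
  have "pell (m + 2) = 2 * pell (m + 1) + pell m" by simp
  then have A: "2 * int (A n) = pell (m + 2) + pell (m + 1) - (-1) ^ m"
    and B: "2 * int (B n) = pell (m + 2) + pell (m + 1) + (-1) ^ m"
    using num_packings_excl_even[of m] unfolding n A_Suc_eq_num_packings B_Suc_eq_num_packings by simp_all
  have "2 * real (A n) = real_of_int (pell (m + 2) + pell (m + 1)) - (-1) ^ m"
    using arg_cong[OF A, of real_of_int] by simp
  moreover have "2 * real (B n) = real_of_int (pell (m + 2) + pell (m + 1)) + (-1) ^ m"
    using arg_cong[OF B, of real_of_int] by simp
  moreover have "H (n + 1) = real_of_int (pell (m + 2) + pell (m + 1))"
    using H_Suc_eq_pell[of "Suc m"] by (simp add: n)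
  moreover have "(- 1) ^ n = - ((- 1) ^ m :: real)" by (simp add: n)
  ultimately show "real (A n) = H (n + 1) / 2 + (-1) ^ n / 2"
    and "real (B n) = H (n + 1) / 2 - (-1) ^ n / 2"
    by linarith+
qed

theorem theorem3:
  shows "A 1 = 1 \<and> A 2 = 4 \<and> B 1 = 2 \<and> B 2 = 3 \<and>
    (\<forall>n\<ge>1.
      real (A n) = ((1 + sqrt 2) ^ (n+1) + (1 - sqrt 2) ^ (n+1)) / 4 + (-1) ^ n / 2 \<and>
      real (A n) = H (n+1) / 2 + (-1) ^ n / 2 \<and>
      real (B n) = ((1 + sqrt 2) ^ (n+1) + (1 - sqrt 2) ^ (n+1)) / 4 - (-1) ^ n / 2 \<and>
      real (B n) = H (n+1) / 2 - (-1) ^ n / 2)"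
proof -
  have H_2: "H 2 = 3" and H_3: "H 3 = 7"
    using H_Suc_Suc[of 0] H_Suc_Suc[of 1] by (simp_all add: H_0 H_1 numeral_2_eq_2 numeral_3_eq_3)
  have "A 1 = 1 \<and> A 2 = 4 \<and> B 1 = 2 \<and> B 2 = 3"
    using A_B_eq_H[of 1, unfolded one_add_one] A_B_eq_H[of 2] H_2 H_3 by simp
  moreover have "H (n + 1) / 2 = ((1 + sqrt 2) ^ (n + 1) + (1 - sqrt 2) ^ (n + 1)) / 4" for n
    unfolding H_def by simp
  ultimately show ?thesis
    using A_B_eq_H by simp
qed

end
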